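(* The image $\operatorname{Im}\sharp$ is contained in the even subalgebra $U(\mathfrak{sl}_2)_e$ and is a proper subalgebra of it; that is, $\operatorname{Im}\sharp\neq U(\mathfrak{sl}_2)_e$ and $\operatorname{Im}\sharp\neq\mathbb C\cdot 1$.
   Context: All algebras are unital associative over $\mathbb C$, $[x,y]=xy-yx$, $\mathbf i=\sqrt{-1}$. $U(\mathfrak{sl}_2)$ is generated by $E,F,H$ with $[H,E]=2E$, $[H,F]=-2F$, $[E,F]=H$. For $n\in\mathbb Z$ let $U_n$ be the span of all $E^iF^jH^k$ ($i,j,k\in\mathbb N$, $i-j=n$); this makes $U(\mathfrak{sl}_2)$ a $\mathbb Z$-graded algebra, and the even subalgebra is $U(\mathfrak{sl}_2)_e=\bigoplus_{n\in\mathbb Z}U_{2n}$. $\Re$ is generated by $A,B,C,\Delta$ with $[A,B]=[B,C]=[C,A]=2\Delta$ and such that $[A,\Delta]+AC-BA$, $[B,\Delta]+BA-CB$, $[C,\Delta]+CB-AC$ are central. $\sharp:\Re\to U(\mathfrak{sl}_2)$ is the unique algebra homomorphism with $A\mapsto \frac{(E+F-2)(E+F+2)}{16}$, $B\mapsto\frac{(H-2)(H+2)}{16}$, $C\mapsto\frac{(\mathbf iE-\mathbf iF-2)(\mathbf iE-\mathbf iF+2)}{16}$, $\Delta\mapsto\frac{(H+2)F^2-(H-2)E^2}{64}$. A subalgebra is proper if it is neither the whole algebra nor the subalgebra generated by the unit. *)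

theory Defs
  imports Complex_Main "HOL-Library.Poly_Mapping"
begin

datatype gen = GE | GF | GH

datatype fword = FW "gen list"

fun fw_list :: "fword \<Rightarrow> gen list" where "fw_list (FW w) = w"

instantiation fword :: monoid_add
begin
definition zero_fword :: fword where "zero_fword = FW []"
definition plus_fword :: "fword \<Rightarrow> fword \<Rightarrow> fword" where
  "plus_fword u v = FW (fw_list u @ fw_list v)"
instance
proof
  fix a b c :: fword
  show "a + b + c = a + (b + c)"
    by (cases a; cases b; cases c) (simp add: plus_fword_def)
  show "0 + a = a" by (cases a) (simp add: plus_fword_def zero_fword_def)
  show "a + 0 = a" by (cases a) (simp add: plus_fword_def zero_fword_def)
qed
end

text \<open>Free algebra \<open>\<complex>\<langle>E,F,H\<rangle>\<close>: finitely supported complex functions on words,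
  with convolution product (a ring_1 by the Poly_Mapping library).\<close>
type_synonym FA = "fword \<Rightarrow>\<^sub>0 complex"

definition sc :: "complex \<Rightarrow> FA" where "sc c = Poly_Mapping.single 0 c"

definition gE :: FA where "gE = Poly_Mapping.single (FW [GE]) 1"
definition gF :: FA where "gF = Poly_Mapping.single (FW [GF]) 1"
definition gH :: FA where "gH = Poly_Mapping.single (FW [GH]) 1"

inductive_set ideal_gen :: "'a::ring_1 set \<Rightarrow> 'a set" for R where
  gen: "r \<in> R \<Longrightarrow> r \<in> ideal_gen R"
| zero: "0 \<in> ideal_gen R"
| add: "x \<in> ideal_gen R \<Longrightarrow> y \<in> ideal_gen R \<Longrightarrow> x + y \<in> ideal_gen R"
| mult: "x \<in> ideal_gen R \<Longrightarrow> a * x * b \<in> ideal_gen R"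

definition sl2_rels :: "FA set" where
  "sl2_rels = {gH * gE - gE * gH - 2 * gE, gH * gF - gF * gH + 2 * gF, gE * gF - gF * gE - gH}"

definition sl2_ideal :: "FA set" where "sl2_ideal = ideal_gen sl2_rels"

text \<open>Elements of U(sl_2) are the cosets \<open>x + I\<close>.\<close>
definition cls :: "FA \<Rightarrow> FA set" where "cls x = {y. x - y \<in> sl2_ideal}"

inductive_set subalg_gen :: "FA set \<Rightarrow> FA set" for S where
  gen: "s \<in> S \<Longrightarrow> s \<in> subalg_gen S"
| scal: "sc c \<in> subalg_gen S"
| add: "x \<in> subalg_gen S \<Longrightarrow> y \<in> subalg_gen S \<Longrightarrow> x + y \<in> subalg_gen S"
| mult: "x \<in> subalg_gen S \<Longrightarrow> y \<in> subalg_gen S \<Longrightarrow> x * y \<in> subalg_gen S"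

text \<open>Lift of \<open>U_n\<close>: the complex span of \<open>E^i F^j H^k\<close> with \<open>i - j = n\<close>.\<close>
inductive_set grade_lift :: "int \<Rightarrow> FA set" for n where
  zero: "0 \<in> grade_lift n"
| mono: "int i - int j = n \<Longrightarrow> x \<in> grade_lift n \<Longrightarrow>
           sc c * gE ^ i * gF ^ j * gH ^ k + x \<in> grade_lift n"

text \<open>Lift of the even subalgebra \<open>\<Oplus>_n U_{2n}\<close>.\<close>
inductive_set even_lift :: "FA set" where
  zero: "0 \<in> even_lift"
| add: "x \<in> grade_lift (2 * n) \<Longrightarrow> y \<in> even_lift \<Longrightarrow> x + y \<in> even_lift"

definition U_even :: "FA set set" where "U_even = cls ` even_lift"

definition U_scalars :: "FA set set" where "U_scalars = cls ` range sc"

definition sharpA :: FA where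
  "sharpA = sc (1/16) * (gE + gF - 2) * (gE + gF + 2)"
definition sharpB :: FA where
  "sharpB = sc (1/16) * (gH - 2) * (gH + 2)"
definition sharpC :: FA where
  "sharpC = sc (1/16) * (sc \<i> * gE - sc \<i> * gF - 2) * (sc \<i> * gE - sc \<i> * gF + 2)"
definition sharpD :: FA where
  "sharpD = sc (1/64) * ((gH + 2) * gF ^ 2 - (gH - 2) * gE ^ 2)"

definition Im_sharp :: "FA set set" where
  "Im_sharp = cls ` subalg_gen {sharpA, sharpB, sharpC, sharpD}"

end

theory Submission
  imports Defs "HOL-Library.Function_Algebras"
begin

text \<open>The four images are built from \<open>H\<close>, scalars and products of two of \<open>E, F\<close>. Modulo the
  relations, products of ordered monomials \<open>E\<^sup>i F\<^sup>j H\<^sup>k\<close> can be reordered without changing the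
  degree \<open>i - j\<close>, since \<open>H E\<^sup>i\<close>, \<open>H F\<^sup>j\<close> and \<open>F E\<^sup>i\<close> rewrite into terms of the same degree;
  hence the degree is additive and \<open>Im \<sharp>\<close> lies in the even part.

  For properness, take the three-dimensional irreducible representation. Reversing its
  weight basis conjugates \<open>E\<close> into \<open>F\<close> and \<open>H\<close> into \<open>-H\<close>; this fixes the images of
  \<open>A, B, C, \<Delta>\<close>, hence all of \<open>Im \<sharp>\<close>, but not \<open>E\<^sup>2\<close>, which is even. Finally \<open>\<sharp>(B)\<close> acts as
  \<open>diag(0, -1/4, 0)\<close>, so it is not a scalar.\<close>

section \<open>Congruence modulo the defining ideal\<close>

lemma sl2_ideal_zero: "0 \<in> sl2_ideal"
  by (simp add: sl2_ideal_def ideal_gen.zero)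

lemma sl2_ideal_add: "x \<in> sl2_ideal \<Longrightarrow> y \<in> sl2_ideal \<Longrightarrow> x + y \<in> sl2_ideal"
  by (simp add: sl2_ideal_def ideal_gen.add)

lemma sl2_ideal_mult: "x \<in> sl2_ideal \<Longrightarrow> a * x * b \<in> sl2_ideal"
  by (simp add: sl2_ideal_def ideal_gen.mult)

lemma sl2_ideal_uminus: "x \<in> sl2_ideal \<Longrightarrow> - x \<in> sl2_ideal"
  using sl2_ideal_mult[of x "-1" 1] by simp

definition sl2_cong :: "FA \<Rightarrow> FA \<Rightarrow> bool" (infix "\<approx>" 50) where
  "x \<approx> y \<longleftrightarrow> x - y \<in> sl2_ideal"

lemma sl2_cong_refl [simp]: "x \<approx> x"
  by (simp add: sl2_cong_def sl2_ideal_zero)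

lemma sl2_cong_sym: "x \<approx> y \<Longrightarrow> y \<approx> x"
  unfolding sl2_cong_def using sl2_ideal_uminus by fastforce

lemma sl2_cong_trans [trans]: "x \<approx> y \<Longrightarrow> y \<approx> z \<Longrightarrow> x \<approx> z"
  unfolding sl2_cong_def using sl2_ideal_add by fastforce

lemma sl2_cong_add: "x \<approx> x' \<Longrightarrow> y \<approx> y' \<Longrightarrow> x + y \<approx> x' + y'"
  unfolding sl2_cong_def using sl2_ideal_add[of "x - x'" "y - y'"] by (simp add: algebra_simps)

lemma sl2_cong_diff: "x \<approx> x' \<Longrightarrow> y \<approx> y' \<Longrightarrow> x - y \<approx> x' - y'"
  unfolding sl2_cong_def using sl2_ideal_add[OF _ sl2_ideal_uminus, of "x - x'" "y - y'"]
  by (simp add: algebra_simps)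

lemma sl2_cong_mult: "x \<approx> x' \<Longrightarrow> y \<approx> y' \<Longrightarrow> x * y \<approx> x' * y'"
proof -
  assume "x \<approx> x'" "y \<approx> y'"
  then have "(x - x') * y + x' * (y - y') \<in> sl2_ideal"
    unfolding sl2_cong_def using sl2_ideal_add sl2_ideal_mult[of _ 1] sl2_ideal_mult[of _ _ 1]
    by simp
  moreover have "(x - x') * y + x' * (y - y') = x * y - x' * y'"
    by (simp add: algebra_simps)
  ultimately show ?thesis
    unfolding sl2_cong_def by simp
qed

lemma cls_eq_iff: "cls x = cls y \<longleftrightarrow> x \<approx> y"
proof
  assume "cls x = cls y"
  then show "x \<approx> y"
    using sl2_cong_refl[of y] unfolding cls_def sl2_cong_def[symmetric] by blast
next
  assume "x \<approx> y"
  then show "cls x = cls y"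
    unfolding cls_def sl2_cong_def[symmetric] using sl2_cong_sym sl2_cong_trans by blast
qed

lemma sl2_ideal_rel: "r \<in> sl2_rels \<Longrightarrow> r \<in> sl2_ideal"
  by (simp add: sl2_ideal_def ideal_gen.gen)

lemma sl2_cong_HE: "gH * gE \<approx> gE * gH + 2 * gE"
  using sl2_ideal_rel[of "gH * gE - gE * gH - 2 * gE"]
  by (simp add: sl2_rels_def sl2_cong_def diff_diff_eq)

lemma sl2_cong_HF: "gH * gF \<approx> gF * gH - 2 * gF"
  using sl2_ideal_rel[of "gH * gF - gF * gH + 2 * gF"]
  by (simp add: sl2_rels_def sl2_cong_def algebra_simps)

lemma sl2_cong_FE: "gF * gE \<approx> gE * gF - gH"
  using sl2_ideal_uminus[OF sl2_ideal_rel[of "gE * gF - gF * gE - gH"]]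
  by (simp add: sl2_rels_def sl2_cong_def algebra_simps)

lemma poly_mapping_single_induct [case_names zero add]:
  fixes f :: "'a \<Rightarrow>\<^sub>0 'b::monoid_add"
  assumes "P 0" "\<And>f a b. P f \<Longrightarrow> P (f + Poly_Mapping.single a b)"
  shows "P f"
proof (induction f rule: update_induct)
  case const then show ?case using assms(1) .
next
  case (update g k v)
  have "Poly_Mapping.update k v g = g + Poly_Mapping.single k v"
    using update(1)
    by (intro poly_mapping_eqI)
       (auto simp: lookup_update lookup_add lookup_single in_keys_iff when_def)
  then show ?case using assms(2) update(3) by simp
qed

lemma sc_mult: "sc (a * b) = sc a * sc b"
  by (simp add: sc_def mult_single)

lemma sc_one [simp]: "sc 1 = 1"
  by (simp add: sc_def zero_fword_def[symmetric])

lemma sc_uminus: "sc (- a) = - sc a"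
  by (simp add: sc_def single_uminus)

lemma sc_of_nat: "sc (of_nat n) = of_nat n"
  by (simp add: sc_def)

lemma sc_numeral: "sc (numeral n) = numeral n"
  by (simp add: sc_def)

lemma sc_commute: "sc c * x = x * sc c"
proof (induction x rule: poly_mapping_single_induct)
  case zero then show ?case by simp
next
  case (add f a b)
  have "sc c * Poly_Mapping.single a b = Poly_Mapping.single a b * sc c"
    by (simp add: sc_def mult_single mult.commute)
  then show ?case by (simp add: algebra_simps add)
qed

lemma sc_left_commute: "a * (sc c * x) = sc c * (a * x)"
  by (metis mult.assoc sc_commute)

lemma of_nat_left_commute: "x * (of_nat n * y) = of_nat n * (x * (y::'a::ring_1))"
  by (metis mult.assoc mult_of_nat_commute)

lemma numeral_left_commute: "x * (numeral n * y) = numeral n * (x * (y::'a::ring_1))"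
  by (metis of_nat_numeral of_nat_left_commute)

text \<open>Instances only: as simp rules the general forms loop when \<open>x\<close> is itself a numeral.\<close>
lemmas generator_left_commute =
  of_nat_left_commute[of gE] of_nat_left_commute[of gF] of_nat_left_commute[of gH]
  of_nat_left_commute[of "gE ^ k"] of_nat_left_commute[of "gF ^ k"] of_nat_left_commute[of "gH ^ k"]
  numeral_left_commute[of gE] numeral_left_commute[of gF] numeral_left_commute[of gH]
  numeral_left_commute[of "gE ^ k"] numeral_left_commute[of "gF ^ k"] numeral_left_commute[of "gH ^ k"]
  for k

lemmas word_normalize = distrib_left distrib_right left_diff_distrib right_diff_distrib mult.assoc
  generator_left_commute power_commutes mult_2

lemma power_left_commute: "a ^ n * (a * x) = a * (a ^ n * (x::'a::monoid_mult))"
  by (metis mult.assoc power_commutes)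

lemma H_mult_Epow: "gH * gE ^ i \<approx> gE ^ i * gH + of_nat (2 * i) * gE ^ i"
proof (induction i)
  case 0 then show ?case by simp
next
  case (Suc i)
  have "gH * gE ^ Suc i = (gH * gE ^ i) * gE" by (simp only: power_Suc2 mult.assoc)
  also have "\<dots> \<approx> (gE ^ i * gH + of_nat (2 * i) * gE ^ i) * gE"
    by (rule sl2_cong_mult[OF Suc sl2_cong_refl])
  also have "\<dots> = gE ^ i * (gH * gE) + of_nat (2 * i) * gE ^ Suc i"
    by (simp add: word_normalize)
  also have "\<dots> \<approx> gE ^ i * (gE * gH + 2 * gE) + of_nat (2 * i) * gE ^ Suc i"
    by (intro sl2_cong_add sl2_cong_mult sl2_cong_HE sl2_cong_refl)
  also have "\<dots> = gE ^ Suc i * gH + of_nat (2 * Suc i) * gE ^ Suc i"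
    by (simp add: word_normalize power_left_commute)
  finally show ?case .
qed

lemma H_mult_Fpow: "gH * gF ^ j \<approx> gF ^ j * gH - of_nat (2 * j) * gF ^ j"
proof (induction j)
  case 0 then show ?case by simp
next
  case (Suc j)
  have "gH * gF ^ Suc j = (gH * gF ^ j) * gF" by (simp only: power_Suc2 mult.assoc)
  also have "\<dots> \<approx> (gF ^ j * gH - of_nat (2 * j) * gF ^ j) * gF"
    by (rule sl2_cong_mult[OF Suc sl2_cong_refl])
  also have "\<dots> = gF ^ j * (gH * gF) - of_nat (2 * j) * gF ^ Suc j"
    by (simp add: word_normalize)
  also have "\<dots> \<approx> gF ^ j * (gF * gH - 2 * gF) - of_nat (2 * j) * gF ^ Suc j"
    by (intro sl2_cong_diff sl2_cong_mult sl2_cong_HF sl2_cong_refl)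
  also have "\<dots> = gF ^ Suc j * gH - of_nat (2 * Suc j) * gF ^ Suc j"
    by (simp add: word_normalize power_left_commute)
  finally show ?case .
qed

lemma F_mult_Epow:
  "gF * gE ^ Suc i \<approx> gE ^ Suc i * gF - of_nat (Suc i) * gE ^ i * gH - of_nat (Suc i * i) * gE ^ i"
proof (induction i)
  case 0 then show ?case using sl2_cong_FE by simp
next
  case (Suc i)
  have "gF * gE ^ Suc (Suc i) = (gF * gE ^ Suc i) * gE" by (simp only: power_Suc2 mult.assoc)
  also have "\<dots> \<approx> (gE ^ Suc i * gF - of_nat (Suc i) * gE ^ i * gH - of_nat (Suc i * i) * gE ^ i) * gE"
    by (rule sl2_cong_mult[OF Suc sl2_cong_refl])
  also have "\<dots> = gE ^ Suc i * (gF * gE) - of_nat (Suc i) * gE ^ i * (gH * gE)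
                   - of_nat (Suc i * i) * gE ^ Suc i"
    by (simp add: word_normalize)
  also have "\<dots> \<approx> gE ^ Suc i * (gE * gF - gH) - of_nat (Suc i) * gE ^ i * (gE * gH + 2 * gE)
                   - of_nat (Suc i * i) * gE ^ Suc i"
    by (intro sl2_cong_diff sl2_cong_mult sl2_cong_HE sl2_cong_FE sl2_cong_refl)
  also have "\<dots> = gE ^ Suc (Suc i) * gF - of_nat (Suc (Suc i)) * gE ^ Suc i * gH
                   - of_nat (Suc (Suc i) * Suc i) * gE ^ Suc i"
    by (simp add: word_normalize power_left_commute)
  finally show ?case .
qed

section \<open>The grading modulo the relations\<close>

definition pbw_mon :: "nat \<Rightarrow> nat \<Rightarrow> nat \<Rightarrow> FA" where
  "pbw_mon i j k = gE ^ i * gF ^ j * gH ^ k"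

definition Ugrade :: "int \<Rightarrow> FA set" where
  "Ugrade n = {x. \<exists>y\<in>grade_lift n. x \<approx> y}"

lemma grade_lift_add: "x \<in> grade_lift n \<Longrightarrow> y \<in> grade_lift n \<Longrightarrow> x + y \<in> grade_lift n"
  by (induction x rule: grade_lift.induct) (auto simp: add.assoc intro: grade_lift.mono)

lemma grade_lift_smult: "y \<in> grade_lift n \<Longrightarrow> sc c * y \<in> grade_lift n"
proof (induction y rule: grade_lift.induct)
  case zero then show ?case by (simp add: grade_lift.zero)
next
  case (mono i j x c' k)
  have "sc c * (sc c' * gE ^ i * gF ^ j * gH ^ k + x) = sc (c * c') * gE ^ i * gF ^ j * gH ^ k + sc c * x"
    by (simp add: sc_mult mult.assoc distrib_left)
  then show ?case using mono by (simp add: grade_lift.mono)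
qed

lemma Ugrade_zero: "0 \<in> Ugrade n"
  unfolding Ugrade_def using grade_lift.zero sl2_cong_refl by blast

lemma Ugrade_add: "x \<in> Ugrade n \<Longrightarrow> y \<in> Ugrade n \<Longrightarrow> x + y \<in> Ugrade n"
  unfolding Ugrade_def using grade_lift_add sl2_cong_add by blast

lemma Ugrade_smult: "x \<in> Ugrade n \<Longrightarrow> sc c * x \<in> Ugrade n"
  unfolding Ugrade_def using grade_lift_smult sl2_cong_mult[OF sl2_cong_refl] by blast

lemma Ugrade_uminus: "x \<in> Ugrade n \<Longrightarrow> - x \<in> Ugrade n"
  using Ugrade_smult[of x n "-1"] by (simp add: sc_uminus)

lemma Ugrade_diff: "x \<in> Ugrade n \<Longrightarrow> y \<in> Ugrade n \<Longrightarrow> x - y \<in> Ugrade n"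
  using Ugrade_add[OF _ Ugrade_uminus] by (metis diff_conv_add_uminus)

lemma Ugrade_of_nat_mult: "x \<in> Ugrade n \<Longrightarrow> of_nat m * x \<in> Ugrade n"
  using Ugrade_smult[of x n "of_nat m"] by (simp add: sc_of_nat)

lemma Ugrade_cong: "x \<approx> x' \<Longrightarrow> x' \<in> Ugrade n \<Longrightarrow> x \<in> Ugrade n"
  unfolding Ugrade_def using sl2_cong_trans by blast

lemma Ugrade_pbw_mon: "int i - int j = n \<Longrightarrow> pbw_mon i j k \<in> Ugrade n"
  using grade_lift.mono[OF _ grade_lift.zero, of i j n 1 k]
  unfolding Ugrade_def pbw_mon_def by force

lemma Ugrade_sc: "sc c \<in> Ugrade 0"
  using Ugrade_smult[OF Ugrade_pbw_mon[of 0 0 0 0]] by (simp add: pbw_mon_def)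

lemma Ugrade_numeral: "numeral m \<in> Ugrade 0"
  using Ugrade_sc[of "numeral m"] by (simp add: sc_numeral)

lemma Ugrade_gE: "gE \<in> Ugrade 1"
  using Ugrade_pbw_mon[of 1 0 1 0] by (simp add: pbw_mon_def)

lemma Ugrade_gF: "gF \<in> Ugrade (-1)"
  using Ugrade_pbw_mon[of 0 1 "-1" 0] by (simp add: pbw_mon_def)

lemma Ugrade_gH: "gH \<in> Ugrade 0"
  using Ugrade_pbw_mon[of 0 0 0 1] by (simp add: pbw_mon_def)

lemma Ugrade_left_mult:
  assumes "\<And>i j k. int i - int j = n \<Longrightarrow> a * pbw_mon i j k \<in> Ugrade m"
    and "x \<in> Ugrade n"
  shows "a * x \<in> Ugrade m"
proof -
  obtain y where y: "y \<in> grade_lift n" "x \<approx> y"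
    using assms(2) unfolding Ugrade_def by blast
  from y(1) have "a * y \<in> Ugrade m"
  proof (induction y rule: grade_lift.induct)
    case zero then show ?case by (simp add: Ugrade_zero)
  next
    case (mono i j x c k)
    have "a * (sc c * gE ^ i * gF ^ j * gH ^ k + x) = sc c * (a * pbw_mon i j k) + a * x"
      by (simp add: pbw_mon_def distrib_left mult.assoc sc_left_commute)
    then show ?case using mono assms(1) by (simp add: Ugrade_add Ugrade_smult)
  qed
  then show ?thesis using sl2_cong_mult[OF sl2_cong_refl y(2)] Ugrade_cong by blast
qed

lemma Ugrade_gE_mult: "x \<in> Ugrade n \<Longrightarrow> gE * x \<in> Ugrade (n + 1)"
proof (rule Ugrade_left_mult)
  fix i j k assume "int i - int j = n"
  then show "gE * pbw_mon i j k \<in> Ugrade (n + 1)"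
    using Ugrade_pbw_mon[of "Suc i" j "n + 1" k] by (simp add: pbw_mon_def mult.assoc)
qed

lemma Ugrade_gH_mult: "x \<in> Ugrade n \<Longrightarrow> gH * x \<in> Ugrade n"
proof (rule Ugrade_left_mult)
  fix i j k assume ij: "int i - int j = n"
  have "gH * pbw_mon i j k = (gH * gE ^ i) * gF ^ j * gH ^ k"
    by (simp add: pbw_mon_def mult.assoc)
  also have "\<dots> \<approx> (gE ^ i * gH + of_nat (2 * i) * gE ^ i) * gF ^ j * gH ^ k"
    by (intro sl2_cong_mult H_mult_Epow sl2_cong_refl)
  also have "\<dots> = gE ^ i * (gH * gF ^ j) * gH ^ k + of_nat (2 * i) * pbw_mon i j k"
    by (simp add: pbw_mon_def word_normalize)
  also have "\<dots> \<approx> gE ^ i * (gF ^ j * gH - of_nat (2 * j) * gF ^ j) * gH ^ k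
                   + of_nat (2 * i) * pbw_mon i j k"
    by (intro sl2_cong_add sl2_cong_mult H_mult_Fpow sl2_cong_refl)
  also have "\<dots> = pbw_mon i j (Suc k) - of_nat (2 * j) * pbw_mon i j k + of_nat (2 * i) * pbw_mon i j k"
    by (simp add: pbw_mon_def word_normalize)
  finally have "gH * pbw_mon i j k \<approx> \<dots>" .
  moreover have "\<dots> \<in> Ugrade n"
    using ij by (intro Ugrade_add Ugrade_diff Ugrade_of_nat_mult Ugrade_pbw_mon)
  ultimately show "gH * pbw_mon i j k \<in> Ugrade n" by (rule Ugrade_cong)
qed

lemma Ugrade_gF_mult: "x \<in> Ugrade n \<Longrightarrow> gF * x \<in> Ugrade (n - 1)"
proof (rule Ugrade_left_mult)
  fix i j k assume ij: "int i - int j = n"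
  show "gF * pbw_mon i j k \<in> Ugrade (n - 1)"
  proof (cases i)
    case 0
    then show ?thesis
      using ij Ugrade_pbw_mon[of 0 "Suc j" "n - 1" k] by (simp add: pbw_mon_def mult.assoc)
  next
    case (Suc i')
    have "gF * pbw_mon i j k = (gF * gE ^ Suc i') * gF ^ j * gH ^ k"
      using Suc by (simp add: pbw_mon_def mult.assoc)
    also have "\<dots> \<approx> (gE ^ Suc i' * gF - of_nat (Suc i') * gE ^ i' * gH
                     - of_nat (Suc i' * i') * gE ^ i') * gF ^ j * gH ^ k"
      by (intro sl2_cong_mult F_mult_Epow sl2_cong_refl)
    also have "\<dots> = pbw_mon (Suc i') (Suc j) k - of_nat (Suc i') * (gE ^ i' * (gH * gF ^ j) * gH ^ k)
                   - of_nat (Suc i' * i') * pbw_mon i' j k"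
      by (simp add: pbw_mon_def word_normalize)
    also have "\<dots> \<approx> pbw_mon (Suc i') (Suc j) k
                   - of_nat (Suc i') * (gE ^ i' * (gF ^ j * gH - of_nat (2 * j) * gF ^ j) * gH ^ k)
                   - of_nat (Suc i' * i') * pbw_mon i' j k"
      by (intro sl2_cong_diff sl2_cong_mult H_mult_Fpow sl2_cong_refl)
    also have "\<dots> = pbw_mon (Suc i') (Suc j) k - of_nat (Suc i') * pbw_mon i' j (Suc k)
                   + of_nat (Suc i') * (of_nat (2 * j) * pbw_mon i' j k)
                   - of_nat (Suc i' * i') * pbw_mon i' j k"
      by (simp add: pbw_mon_def word_normalize)
    finally have "gF * pbw_mon i j k \<approx> \<dots>" .
    moreover have "\<dots> \<in> Ugrade (n - 1)"
      using ij Suc by (intro Ugrade_add Ugrade_diff Ugrade_of_nat_mult Ugrade_pbw_mon) auto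
    ultimately show ?thesis by (rule Ugrade_cong)
  qed
qed

lemma Ugrade_Hpow_mult: "x \<in> Ugrade n \<Longrightarrow> gH ^ k * x \<in> Ugrade n"
  by (induction k) (simp_all add: mult.assoc Ugrade_gH_mult)

lemma Ugrade_Fpow_mult: "x \<in> Ugrade n \<Longrightarrow> gF ^ k * x \<in> Ugrade (n - int k)"
proof (induction k)
  case (Suc k)
  then show ?case using Ugrade_gF_mult[OF Suc.IH] by (simp add: mult.assoc algebra_simps)
qed simp

lemma Ugrade_Epow_mult: "x \<in> Ugrade n \<Longrightarrow> gE ^ k * x \<in> Ugrade (n + int k)"
proof (induction k)
  case (Suc k)
  then show ?case using Ugrade_gE_mult[OF Suc.IH] by (simp add: mult.assoc algebra_simps)
qed simp

lemma Ugrade_mult: "x \<in> Ugrade a \<Longrightarrow> z \<in> Ugrade b \<Longrightarrow> x * z \<in> Ugrade (a + b)"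
proof -
  assume "x \<in> Ugrade a" and z: "z \<in> Ugrade b"
  obtain y where y: "y \<in> grade_lift a" "x \<approx> y"
    using \<open>x \<in> Ugrade a\<close> unfolding Ugrade_def by blast
  from y(1) have "y * z \<in> Ugrade (a + b)"
  proof (induction y rule: grade_lift.induct)
    case zero then show ?case by (simp add: Ugrade_zero)
  next
    case (mono i j x c k)
    have "(sc c * gE ^ i * gF ^ j * gH ^ k + x) * z = sc c * (gE ^ i * (gF ^ j * (gH ^ k * z))) + x * z"
      by (simp add: distrib_right mult.assoc)
    moreover have "b - int j + int i = a + b" using mono(1) by simp
    moreover have "gE ^ i * (gF ^ j * (gH ^ k * z)) \<in> Ugrade (b - int j + int i)"
      using z by (intro Ugrade_Epow_mult Ugrade_Fpow_mult Ugrade_Hpow_mult)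
    ultimately show ?case using mono by (metis Ugrade_add Ugrade_smult)
  qed
  then show ?thesis using sl2_cong_mult[OF y(2) sl2_cong_refl] Ugrade_cong by blast
qed

section \<open>The even part\<close>

inductive_set Uparity :: "int \<Rightarrow> FA set" for p where
  zero: "0 \<in> Uparity p"
| add: "x \<in> Ugrade n \<Longrightarrow> even (n - p) \<Longrightarrow> y \<in> Uparity p \<Longrightarrow> x + y \<in> Uparity p"

lemma Ugrade_subset_Uparity: "x \<in> Ugrade n \<Longrightarrow> even (n - p) \<Longrightarrow> x \<in> Uparity p"
  using Uparity.add[OF _ _ Uparity.zero] by simp

lemma Uparity_add: "x \<in> Uparity p \<Longrightarrow> y \<in> Uparity p \<Longrightarrow> x + y \<in> Uparity p"
  by (induction x rule: Uparity.induct) (auto simp: add.assoc intro: Uparity.add)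

lemma Uparity_smult: "x \<in> Uparity p \<Longrightarrow> sc c * x \<in> Uparity p"
  by (induction x rule: Uparity.induct)
     (auto simp: distrib_left intro: Uparity.zero Uparity.add Ugrade_smult)

lemma Uparity_diff: "x \<in> Uparity p \<Longrightarrow> y \<in> Uparity p \<Longrightarrow> x - y \<in> Uparity p"
  using Uparity_add[OF _ Uparity_smult[of y p "-1"]] by (simp add: sc_uminus)

lemma Uparity_mult:
  assumes "x \<in> Uparity p" "z \<in> Uparity q" "even (p + q - r)"
  shows "x * z \<in> Uparity r"
  using assms(1)
proof (induction x rule: Uparity.induct)
  case zero then show ?case by (simp add: Uparity.zero)
next
  case (add x n y)
  have "x * z \<in> Uparity r"
    using assms(2)
  proof (induction z rule: Uparity.induct)
    case zero then show ?case by (simp add: Uparity.zero)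
  next
    case (add z m w)
    have "x * z \<in> Uparity r"
      using \<open>even (n - p)\<close> add.hyps(2) assms(3)
      by (intro Ugrade_subset_Uparity[OF Ugrade_mult[OF \<open>x \<in> Ugrade n\<close> add.hyps(1)]]) presburger
    then show ?case using add.IH by (simp add: distrib_left Uparity_add)
  qed
  then show ?case using add.IH by (simp add: distrib_right Uparity_add)
qed

lemma Uparity_zero_even_lift: "x \<in> Uparity 0 \<Longrightarrow> \<exists>y\<in>even_lift. x \<approx> y"
proof (induction x rule: Uparity.induct)
  case zero then show ?case using even_lift.zero sl2_cong_refl by blast
next
  case (add x n y)
  obtain m where "n = 2 * m" using \<open>even (n - 0)\<close> by auto
  then obtain x' where "x' \<in> grade_lift (2 * m)" "x \<approx> x'"
    using \<open>x \<in> Ugrade n\<close> unfolding Ugrade_def by blast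
  moreover obtain y' where "y' \<in> even_lift" "y \<approx> y'" using add.IH by blast
  ultimately show ?case using even_lift.add sl2_cong_add by blast
qed

lemma square_minus_four: "(y - 2) * (y + 2) = y * y - (4 :: 'a::ring_1)"
proof -
  have "y * 2 = 2 * y" by (metis mult_of_nat_commute of_nat_numeral)
  then show ?thesis by (simp add: distrib_left left_diff_distrib)
qed

lemma Uparity_sc: "sc c \<in> Uparity 0"
  using Ugrade_sc by (rule Ugrade_subset_Uparity) simp

lemma Uparity_numeral: "numeral m \<in> Uparity 0"
  using Ugrade_numeral by (rule Ugrade_subset_Uparity) simp

lemma Uparity_square_minus_four:
  assumes "y \<in> Uparity 1"
  shows "sc c * (y - 2) * (y + 2) \<in> Uparity 0"
proof -
  have "y * y - 4 \<in> Uparity 0"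
    using Uparity_mult[OF assms assms, of 0] Uparity_numeral by (simp add: Uparity_diff)
  then show ?thesis
    using Uparity_mult[OF Uparity_sc, of _ 0 0] by (simp add: mult.assoc square_minus_four)
qed

lemma Uparity_gE: "gE \<in> Uparity 1" and Uparity_gF: "gF \<in> Uparity 1"
  and Uparity_gH: "gH \<in> Uparity 0"
  by (simp_all add: Ugrade_subset_Uparity[OF Ugrade_gE] Ugrade_subset_Uparity[OF Ugrade_gF]
      Ugrade_subset_Uparity[OF Ugrade_gH])

lemma sharpA_even: "sharpA \<in> Uparity 0"
  unfolding sharpA_def by (intro Uparity_square_minus_four Uparity_add Uparity_gE Uparity_gF)

lemma sharpC_even: "sharpC \<in> Uparity 0"
  unfolding sharpC_def
  by (intro Uparity_square_minus_four Uparity_diff Uparity_smult Uparity_gE Uparity_gF)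

lemma sharpB_even: "sharpB \<in> Uparity 0"
proof -
  have "gH - 2 \<in> Uparity 0" "gH + 2 \<in> Uparity 0"
    using Uparity_gH Uparity_numeral by (simp_all add: Uparity_add Uparity_diff)
  then show ?thesis
    unfolding sharpB_def using Uparity_mult[OF Uparity_sc, of _ 0 0] Uparity_mult[of _ 0 _ 0 0]
    by simp
qed

lemma sharpD_even: "sharpD \<in> Uparity 0"
proof -
  have "(gH + 2) * gF ^ 2 \<in> Uparity 0" "(gH - 2) * gE ^ 2 \<in> Uparity 0"
    using Uparity_gH Uparity_numeral Uparity_mult[OF Uparity_gE Uparity_gE, of 0]
      Uparity_mult[OF Uparity_gF Uparity_gF, of 0] Uparity_mult[of _ 0 _ 0 0]
    by (simp_all add: power2_eq_square Uparity_add Uparity_diff)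
  then show ?thesis
    unfolding sharpD_def using Uparity_mult[OF Uparity_sc, of _ 0 0] by (simp add: Uparity_diff)
qed

lemma subalg_sharp_even: "s \<in> subalg_gen {sharpA, sharpB, sharpC, sharpD} \<Longrightarrow> s \<in> Uparity 0"
proof (induction s rule: subalg_gen.induct)
  case (gen s)
  then show ?case using sharpA_even sharpB_even sharpC_even sharpD_even by blast
next
  case (mult x y) then show ?case using Uparity_mult[of x 0 y 0 0] by simp
qed (simp_all add: Uparity_sc Uparity_add)

lemma Im_sharp_subset_U_even: "Im_sharp \<subseteq> U_even"
proof
  fix u assume "u \<in> Im_sharp"
  then obtain s where "s \<in> subalg_gen {sharpA, sharpB, sharpC, sharpD}" "u = cls s"
    unfolding Im_sharp_def by blast
  moreover obtain y where "y \<in> even_lift" "s \<approx> y"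
    using subalg_sharp_even Uparity_zero_even_lift calculation(1) by blast
  ultimately show "u \<in> U_even"
    unfolding U_even_def by (simp add: cls_eq_iff)
qed

section \<open>The three-dimensional representation\<close>

datatype idx = I1 | I2 | I3

text \<open>Pointwise \<open>+\<close> and \<open>-\<close> come from \<open>Function_Algebras\<close>.\<close>
type_synonym mat3 = "idx \<Rightarrow> idx \<Rightarrow> complex"

lemma all_idx: "(\<forall>i. P i) \<longleftrightarrow> P I1 \<and> P I2 \<and> P I3"
  by (metis idx.exhaust)

definition mat3_mult :: "mat3 \<Rightarrow> mat3 \<Rightarrow> mat3" where
  "mat3_mult A B = (\<lambda>i j. A i I1 * B I1 j + A i I2 * B I2 j + A i I3 * B I3 j)"

definition mat3_one :: mat3 where
  "mat3_one = (\<lambda>i j. if i = j then 1 else 0)"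

definition mat3_scale :: "complex \<Rightarrow> mat3 \<Rightarrow> mat3" where
  "mat3_scale c A = (\<lambda>i j. c * A i j)"

lemmas mat3_simps = fun_eq_iff all_idx mat3_mult_def mat3_one_def mat3_scale_def fun_diff_def

lemma mat3_mult_assoc: "mat3_mult (mat3_mult A B) C = mat3_mult A (mat3_mult B C)"
  by (simp add: mat3_simps algebra_simps)

lemma mat3_mult_one_left [simp]: "mat3_mult mat3_one A = A"
  by (simp add: mat3_simps)

text \<open>The spin-one representation in the weight basis of weights \<open>2, 0, -2\<close>.\<close>
definition E3 :: mat3 where
  "E3 = (\<lambda>i j. if i = I1 \<and> j = I2 then 2 else if i = I2 \<and> j = I3 then 1 else 0)"
definition F3 :: mat3 where
  "F3 = (\<lambda>i j. if i = I2 \<and> j = I1 then 1 else if i = I3 \<and> j = I2 then 2 else 0)"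
definition H3 :: mat3 where
  "H3 = (\<lambda>i j. if i = I1 \<and> j = I1 then 2 else if i = I3 \<and> j = I3 then -2 else 0)"

fun gen_mat :: "gen \<Rightarrow> mat3" where
  "gen_mat GE = E3" | "gen_mat GF = F3" | "gen_mat GH = H3"

definition word_mat :: "fword \<Rightarrow> mat3" where
  "word_mat w = foldr (\<lambda>g M. mat3_mult (gen_mat g) M) (fw_list w) mat3_one"

lemma word_mat_plus: "word_mat (u + v) = mat3_mult (word_mat u) (word_mat v)"
proof -
  have foldr_mult: "foldr (\<lambda>g M. mat3_mult (gen_mat g) M) xs M
        = mat3_mult (foldr (\<lambda>g M. mat3_mult (gen_mat g) M) xs mat3_one) M" for xs M
    by (induction xs) (simp_all add: mat3_mult_assoc)
  show ?thesis
    by (cases u; cases v) (simp add: word_mat_def plus_fword_def foldr_mult[of _ "foldr _ _ _"])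
qed

lemma word_mat_zero: "word_mat 0 = mat3_one"
  by (simp add: word_mat_def zero_fword_def)

definition rep :: "FA \<Rightarrow> mat3" where
  "rep x = (\<Sum>w\<in>Poly_Mapping.keys x. mat3_scale (Poly_Mapping.lookup x w) (word_mat w))"

lemma mat3_scale_zero [simp]: "mat3_scale 0 A = 0"
  by (simp add: mat3_scale_def fun_eq_iff)

lemma rep_zero [simp]: "rep 0 = 0"
  by (simp add: rep_def)

lemma rep_add [simp]: "rep (x + y) = rep x + rep y"
  unfolding rep_def
  by (rule setsum_keys_plus_distrib) (simp_all add: mat3_simps distrib_right)

lemma rep_uminus [simp]: "rep (- x) = - rep x"
proof -
  have "rep x + rep (- x) = 0" using rep_add[of x "- x"] by simp
  then show ?thesis by (metis neg_eq_iff_add_eq_0)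
qed

lemma rep_diff [simp]: "rep (x - y) = rep x - rep y"
  using rep_add[of x "- y"] by simp

lemma rep_single: "rep (Poly_Mapping.single a b) = mat3_scale b (word_mat a)"
  by (simp add: rep_def)

lemma rep_mult [simp]: "rep (x * y) = mat3_mult (rep x) (rep y)"
proof -
  have single_mult: "rep (Poly_Mapping.single a b * y) = mat3_mult (mat3_scale b (word_mat a)) (rep y)"
    for a b
  proof (induction y rule: poly_mapping_single_induct)
    case zero then show ?case by (simp add: rep_def mat3_simps)
  next
    case (add f c d)
    then show ?case
      by (simp add: distrib_left mult_single rep_single word_mat_plus mat3_simps algebra_simps)
  qed
  show ?thesis
  proof (induction x rule: poly_mapping_single_induct)
    case zero then show ?case by (simp add: rep_def mat3_simps)
  next
    case (add f a b)
    then show ?case by (simp add: distrib_right single_mult rep_single mat3_simps algebra_simps)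
  qed
qed

lemma rep_sc [simp]: "rep (sc c) = mat3_scale c mat3_one"
  by (simp add: sc_def rep_single word_mat_zero)

lemma rep_numeral [simp]: "rep (numeral n) = mat3_scale (numeral n) mat3_one"
  using rep_sc[of "numeral n"] by (simp add: sc_numeral)

lemma rep_gE [simp]: "rep gE = E3" and rep_gF [simp]: "rep gF = F3" and rep_gH [simp]: "rep gH = H3"
  by (simp_all add: gE_def gF_def gH_def rep_single word_mat_def mat3_simps)

lemmas rep_simps = mat3_simps E3_def F3_def H3_def

lemma rep_sl2_ideal: "x \<in> sl2_ideal \<Longrightarrow> rep x = 0"
  unfolding sl2_ideal_def
proof (induction x rule: ideal_gen.induct)
  case (gen r)
  then show ?case by (auto simp: sl2_rels_def rep_simps)
qed (simp_all add: mat3_simps)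

lemma rep_cong: "x \<approx> y \<Longrightarrow> rep x = rep y"
  unfolding sl2_cong_def using rep_sl2_ideal[of "x - y"] by simp

fun reverse_idx :: "idx \<Rightarrow> idx" where
  "reverse_idx I1 = I3" | "reverse_idx I2 = I2" | "reverse_idx I3 = I1"

definition reverse_conj :: "mat3 \<Rightarrow> mat3" where
  "reverse_conj M = (\<lambda>i j. M (reverse_idx i) (reverse_idx j))"

lemma reverse_conj_mult [simp]: "reverse_conj (mat3_mult A B) = mat3_mult (reverse_conj A) (reverse_conj B)"
  by (simp add: reverse_conj_def mat3_simps algebra_simps)

lemma reverse_conj_scalar [simp]: "reverse_conj (mat3_scale c mat3_one) = mat3_scale c mat3_one"
  by (simp add: reverse_conj_def mat3_simps)

lemma reverse_conj_rep_subalg_sharp: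
  "s \<in> subalg_gen {sharpA, sharpB, sharpC, sharpD} \<Longrightarrow> reverse_conj (rep s) = rep s"
proof (induction s rule: subalg_gen.induct)
  case (gen s)
  moreover have "reverse_conj (rep sharpA) = rep sharpA"
    by (simp add: sharpA_def reverse_conj_def rep_simps)
  moreover have "reverse_conj (rep sharpB) = rep sharpB"
    by (simp add: sharpB_def reverse_conj_def rep_simps)
  moreover have "reverse_conj (rep sharpC) = rep sharpC"
    by (simp add: sharpC_def reverse_conj_def rep_simps)
  moreover have "reverse_conj (rep sharpD) = rep sharpD"
    by (simp add: sharpD_def reverse_conj_def rep_simps power2_eq_square)
  ultimately show ?case by blast
next
  case (add x y)
  then show ?case by (simp add: reverse_conj_def fun_eq_iff)
qed simp_all

lemma E_sq_in_U_even: "cls (gE ^ 2) \<in> U_even"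
proof -
  have "gE ^ 2 \<in> grade_lift (2 * 1)"
    using grade_lift.mono[OF _ grade_lift.zero, of 2 0 "2 * 1" 1 0] by simp
  then have "gE ^ 2 + 0 \<in> even_lift" by (rule even_lift.add[OF _ even_lift.zero])
  then show ?thesis unfolding U_even_def by simp
qed

lemma E_sq_notin_Im_sharp: "cls (gE ^ 2) \<notin> Im_sharp"
proof
  assume "cls (gE ^ 2) \<in> Im_sharp"
  then obtain s where "s \<in> subalg_gen {sharpA, sharpB, sharpC, sharpD}" "gE ^ 2 \<approx> s"
    unfolding Im_sharp_def by (auto simp: cls_eq_iff)
  then have "reverse_conj (rep (gE ^ 2)) = rep (gE ^ 2)"
    using reverse_conj_rep_subalg_sharp rep_cong by metis
  then have "reverse_conj (rep (gE ^ 2)) I1 I3 = rep (gE ^ 2) I1 I3" by simp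
  then show False by (simp add: reverse_conj_def rep_simps power2_eq_square)
qed

lemma sharpB_in_Im_sharp: "cls sharpB \<in> Im_sharp"
  unfolding Im_sharp_def by (simp add: subalg_gen.gen)

lemma sharpB_notin_U_scalars: "cls sharpB \<notin> U_scalars"
proof
  assume "cls sharpB \<in> U_scalars"
  then obtain c where "rep sharpB = mat3_scale c mat3_one"
    unfolding U_scalars_def using rep_cong rep_sc by (auto simp: cls_eq_iff)
  then have "rep sharpB I1 I1 = c" "rep sharpB I2 I2 = c"
    by (simp_all add: mat3_simps)
  then show False by (simp add: sharpB_def rep_simps)
qed

theorem theorem7p8:
  shows "Im_sharp \<subseteq> U_even \<and> Im_sharp \<noteq> U_even \<and> Im_sharp \<noteq> U_scalars"
  using Im_sharp_subset_U_even E_sq_in_U_even E_sq_notin_Im_sharp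
    sharpB_in_Im_sharp sharpB_notin_U_scalars
  by blast

end
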